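(* Suppose $\eta_j^2L^2B_j<b_j^2$. For the biased batched SVRG (Algorithm 3), $$\Big(b_j-\frac{(1-\lambda)^2\eta_j^2L^2B_j}{b_j}\Big)\mathbb{E}\|\tilde x_j-\tilde x_{j-1}\|^2+2\eta_jB_j\,\mathbb{E}\langle e_j,\tilde x_j-\tilde x_{j-1}\rangle\le-2(1-\lambda)\eta_jB_j\,\mathbb{E}\langle\nabla f(\tilde x_j),\tilde x_j-\tilde x_{j-1}\rangle+2(1-\lambda)^2\eta_j^2B_j\,\mathbb{E}\|\nabla f(\tilde x_j)\|^2+2\eta_j^2B_j\,\mathbb{E}\|e_j\|^2.$$
   Context: Setting: $f(x)=\frac1n\sum_{i=1}^n f_i(x)$ with each $f_i:\mathbb{R}^d\to\mathbb{R}$ differentiable and $L$-smooth: $\|\nabla f_i(x)-\nabla f_i(y)\|\le L\|x-y\|$. For $\mathcal I\subset\{1,\dots,n\}$, $\nabla f_{\mathcal I}(x)=\frac1{|\mathcal I|}\sum_{i\in\mathcal I}\nabla f_i(x)$. $N\sim\mathrm{Geom}(\gamma')$ means $P(N=k)=(1-\gamma')\gamma'^k$, $k\ge0$. Epoch $j$ of the batched SVRG scheme: $\mathcal I_j$ uniformly random of size $B_j$, $g_j=\nabla f_{\mathcal I_j}(\tilde x_{j-1})$, $x^{(j)}_0=\tilde x_{j-1}$; $N_j\sim\mathrm{Geom}(B_j/(B_j+b_j))$ drawn independently (mean $B_j/b_j$); for $k=0,\dots,N_j-1$, $\tilde{\mathcal I}_k$ uniformly random of size $b_j$ and $x^{(j)}_{k+1}=x^{(j)}_k-\eta_jv^{(j)}_k$;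 $\tilde x_j=x^{(j)}_{N_j}$. Algorithm 3 (biased, $0<\lambda<1$): $v^{(j)}_k=(1-\lambda)(\nabla f_{\tilde{\mathcal I}_k}(x^{(j)}_k)-\nabla f_{\tilde{\mathcal I}_k}(x^{(j)}_0))+\lambda g_j$, and $e_j=\lambda\nabla f_{\mathcal I_j}(\tilde x_{j-1})-(1-\lambda)\nabla f(\tilde x_{j-1})$. $\mathbb{E}$ is expectation over all randomness. *)

theory Defs
  imports "HOL-Analysis.Analysis" "HOL-Probability.Probability"
begin

definition batches :: "nat \<Rightarrow> nat \<Rightarrow> nat set set" where
  "batches n k = {I. I \<subseteq> {..<n} \<and> card I = k}"

definition gradI :: "(nat \<Rightarrow> 'a \<Rightarrow> 'a::real_vector) \<Rightarrow> nat set \<Rightarrow> 'a \<Rightarrow> 'a" where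
  "gradI Df I x = (1 / real (card I)) *\<^sub>R (\<Sum>i\<in>I. Df i x)"

definition gradf :: "(nat \<Rightarrow> 'a \<Rightarrow> 'a::real_vector) \<Rightarrow> nat \<Rightarrow> 'a \<Rightarrow> 'a" where
  "gradf Df n x = (1 / real n) *\<^sub>R (\<Sum>i<n. Df i x)"

text \<open>Inner loop of Algorithm 3 (biased estimator): starting from x (= x_0), anchor x0,
  anchor minibatch gradient g, runs one step per inner minibatch in the list.\<close>
fun inner_loop :: "(nat \<Rightarrow> 'a \<Rightarrow> 'a::real_vector) \<Rightarrow> real \<Rightarrow> real \<Rightarrow> 'a \<Rightarrow> 'a \<Rightarrow> 'a \<Rightarrow> nat set list \<Rightarrow> 'a" where
  "inner_loop Df lam eta x0 g x [] = x"
| "inner_loop Df lam eta x0 g x (S # Ss) =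
     inner_loop Df lam eta x0 g
       (x - eta *\<^sub>R ((1 - lam) *\<^sub>R (gradI Df S x - gradI Df S x0) + lam *\<^sub>R g)) Ss"

fun iid_list :: "nat \<Rightarrow> 'b pmf \<Rightarrow> 'b list pmf" where
  "iid_list 0 p = return_pmf []"
| "iid_list (Suc k) p = bind_pmf p (\<lambda>x. bind_pmf (iid_list k p) (\<lambda>xs. return_pmf (x # xs)))"

text \<open>Joint law of (x~_{j-1}, I_j, x~_j) for epoch j of Algorithm 3, where x~_{j-1} has
  (discrete) law X0, I_j is uniform of size B, N_j ~ Geom(B/(B+b)) i.e.
  P(N=k) = (1-gamma') gamma'^k, and the inner minibatches are iid uniform of size b.\<close>
definition epoch :: "(nat \<Rightarrow> 'a \<Rightarrow> 'a::real_vector) \<Rightarrow> nat \<Rightarrow> nat \<Rightarrow> nat \<Rightarrow> real \<Rightarrow> real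
    \<Rightarrow> 'a pmf \<Rightarrow> ('a \<times> nat set \<times> 'a) pmf" where
  "epoch Df n B b lam eta X0 =
     bind_pmf X0 (\<lambda>x0.
     bind_pmf (pmf_of_set (batches n B)) (\<lambda>I.
     bind_pmf (geometric_pmf (real b / (real B + real b))) (\<lambda>N.
     bind_pmf (iid_list N (pmf_of_set (batches n b))) (\<lambda>Ss.
     return_pmf (x0, I, inner_loop Df lam eta x0 (gradI Df I x0) x0 Ss)))))"

definition err :: "(nat \<Rightarrow> 'a \<Rightarrow> 'a::real_vector) \<Rightarrow> nat \<Rightarrow> real \<Rightarrow> nat set \<Rightarrow> 'a \<Rightarrow> 'a" where
  "err Df n lam I x0 = lam *\<^sub>R gradI Df I x0 - (1 - lam) *\<^sub>R gradf Df n x0"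

end

theory Submission
  imports Defs
begin

text \<open>Given the anchor x0 and the outer batch I, the epoch output is the inner loop stopped after a
  geometric number of steps, so by memorylessness its law Q satisfies Q = p \<delta>(x0) + (1 - p) (Q \<bind> K),
  where K is one inner step and p = b / (B + b). As the squared distance to x0 vanishes at x0, its
  Q-expectation is (1 - p) = B / (B + b) times the Q-expectation of its one-step K-average. That average
  is bounded by expanding the square: the inner direction is an unbiased estimate of
  (1 - \<lambda>) \<nabla>f(x) + e, whose fluctuation has variance at most (1 - \<lambda>)^2 L^2 \<parallel>x - x0\<parallel>^2 / b for
  uniform batches drawn without replacement, and the square of the mean is split by
  \<parallel>u + v\<parallel>^2 \<le> 2 \<parallel>u\<parallel>^2 + 2 \<parallel>v\<parallel>^2. Multiplying by B + b and integrating over x0 and I gives the claim.\<close>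

lemma
  fixes f :: "'b \<Rightarrow> real" and M :: "'a pmf"
  assumes int: "integrable (measure_pmf (bind_pmf M N)) f"
  shows integrable_bind_pmf_kernel: "x \<in> set_pmf M \<Longrightarrow> integrable (measure_pmf (N x)) f"
    and integrable_bind_pmf_conditional: "integrable (measure_pmf M) (\<lambda>x. \<integral>y. f y \<partial>N x)"
proof -
  have fin: "(\<integral>\<^sup>+x. \<integral>\<^sup>+y. ennreal (norm (f y)) \<partial>N x \<partial>M) < \<infinity>"
    using int by (simp add: integrable_iff_bounded)
  then have "AE x in M. (\<integral>\<^sup>+y. ennreal (norm (f y)) \<partial>N x) \<noteq> \<infinity>"
    by (intro nn_integral_PInf_AE) auto
  then show kernel: "x \<in> set_pmf M \<Longrightarrow> integrable (measure_pmf (N x)) f" for x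
    by (simp add: AE_measure_pmf_iff integrable_iff_bounded top.not_eq_extremum)
  have "(\<integral>\<^sup>+x. ennreal (norm (\<integral>y. f y \<partial>N x)) \<partial>M) \<le> (\<integral>\<^sup>+x. \<integral>\<^sup>+y. ennreal (norm (f y)) \<partial>N x \<partial>M)"
    using integral_norm_bound_ennreal[OF kernel]
    by (intro nn_integral_mono_AE) (auto simp: AE_measure_pmf_iff simp del: real_norm_def)
  with fin show "integrable (measure_pmf M) (\<lambda>x. \<integral>y. f y \<partial>N x)"
    by (simp add: integrable_iff_bounded)
qed

lemma integral_bind_pmf:
  fixes f :: "'b \<Rightarrow> real" and M :: "'a pmf"
  assumes int: "integrable (measure_pmf (bind_pmf M N)) f"
  shows "(\<integral>y. f y \<partial>bind_pmf M N) = (\<integral>x. \<integral>y. f y \<partial>N x \<partial>M)"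
proof -
  have nonneg: "(\<integral>y. g y \<partial>bind_pmf M N) = (\<integral>x. \<integral>y. g y \<partial>N x \<partial>M)"
    if g: "integrable (measure_pmf (bind_pmf M N)) g" and g0: "\<And>y. 0 \<le> g y" for g :: "'b \<Rightarrow> real"
  proof -
    have "(\<integral>y. g y \<partial>bind_pmf M N) = enn2real (\<integral>\<^sup>+x. \<integral>\<^sup>+y. ennreal (g y) \<partial>N x \<partial>M)"
      by (subst integral_eq_nn_integral) (auto simp: g0)
    also have "(\<integral>\<^sup>+x. \<integral>\<^sup>+y. ennreal (g y) \<partial>N x \<partial>M) = (\<integral>\<^sup>+x. ennreal (\<integral>y. g y \<partial>N x) \<partial>M)"
      using integrable_bind_pmf_kernel[OF g]
      by (intro nn_integral_cong_AE) (auto simp: AE_measure_pmf_iff g0 nn_integral_eq_integral)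
    also have "enn2real \<dots> = (\<integral>x. \<integral>y. g y \<partial>N x \<partial>M)"
      by (rule integral_eq_nn_integral[symmetric]) (auto simp: g0)
    finally show ?thesis .
  qed
  let ?pos = "\<lambda>y. max (f y) 0" and ?neg = "\<lambda>y. max (- f y) 0"
  have f_split: "f = (\<lambda>y. ?pos y - ?neg y)" by (auto simp: fun_eq_iff)
  have pos: "integrable (measure_pmf (bind_pmf M N)) ?pos"
    and neg: "integrable (measure_pmf (bind_pmf M N)) ?neg"
    using int by auto
  have "(\<integral>y. f y \<partial>bind_pmf M N) = (\<integral>x. \<integral>y. ?pos y \<partial>N x \<partial>M) - (\<integral>x. \<integral>y. ?neg y \<partial>N x \<partial>M)"
    by (subst f_split) (simp add: nonneg[OF pos] nonneg[OF neg] pos neg)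
  also have "\<dots> = (\<integral>x. (\<integral>y. ?pos y \<partial>N x) - (\<integral>y. ?neg y \<partial>N x) \<partial>M)"
    using integrable_bind_pmf_conditional[OF pos] integrable_bind_pmf_conditional[OF neg] by simp
  also have "\<dots> = (\<integral>x. \<integral>y. f y \<partial>N x \<partial>M)"
    using integrable_bind_pmf_kernel[OF int]
    by (intro integral_cong_AE) (auto simp: AE_measure_pmf_iff, subst f_split, simp)
  finally show ?thesis .
qed

lemma integrable_inner_if_norm_sq:
  fixes u v :: "'b \<Rightarrow> 'a::real_inner"
  assumes "integrable (measure_pmf M) (\<lambda>x. (norm (u x))^2)"
    and "integrable (measure_pmf M) (\<lambda>x. (norm (v x))^2)"
  shows "integrable (measure_pmf M) (\<lambda>x. u x \<bullet> v x)"
proof (rule Bochner_Integration.integrable_bound[OF Bochner_Integration.integrable_add[OF assms]])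
  have "\<bar>u x \<bullet> v x\<bar> \<le> (norm (u x))^2 + (norm (v x))^2" for x
  proof -
    have "\<bar>u x \<bullet> v x\<bar> \<le> norm (u x) * norm (v x)" by (rule Cauchy_Schwarz_ineq2)
    also have "\<dots> \<le> 2 * norm (u x) * norm (v x)" by simp
    also have "\<dots> \<le> (norm (u x))^2 + (norm (v x))^2" by (rule sum_squares_bound)
    finally show ?thesis .
  qed
  then show "AE x in M. norm (u x \<bullet> v x) \<le> norm ((norm (u x))^2 + (norm (v x))^2)"
    by simp
qed simp

lemma integral_nonpos_pmf:
  fixes f :: "'b \<Rightarrow> real"
  assumes "\<And>x. x \<in> set_pmf M \<Longrightarrow> f x \<le> 0"
  shows "(\<integral>x. f x \<partial>M) \<le> 0"
proof -
  have "0 \<le> (\<integral>x. - f x \<partial>M)"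
    by (rule integral_nonneg_AE) (simp add: AE_measure_pmf_iff assms)
  then show ?thesis by simp
qed

lemma integral_nonpos_bind_bind_pmf:
  fixes G :: "'a \<times> 'b \<times> 'c \<Rightarrow> real" and X :: "'a pmf" and Y :: "'b pmf"
    and Q :: "'a \<Rightarrow> 'b \<Rightarrow> 'c pmf"
  defines "M \<equiv> bind_pmf X (\<lambda>x. bind_pmf Y (\<lambda>y. map_pmf (\<lambda>z. (x, y, z)) (Q x y)))"
  assumes int: "integrable (measure_pmf M) G"
    and le: "\<And>x y. x \<in> set_pmf X \<Longrightarrow> y \<in> set_pmf Y \<Longrightarrow> (\<integral>z. G (x, y, z) \<partial>Q x y) \<le> 0"
  shows "(\<integral>w. G w \<partial>M) \<le> 0"
proof -
  have inner: "(\<integral>w. G w \<partial>bind_pmf Y (\<lambda>y. map_pmf (\<lambda>z. (x, y, z)) (Q x y))) \<le> 0"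
    if x: "x \<in> set_pmf X" for x
  proof -
    note int_x = integrable_bind_pmf_kernel[OF int[unfolded M_def] x]
    have "(\<integral>w. G w \<partial>bind_pmf Y (\<lambda>y. map_pmf (\<lambda>z. (x, y, z)) (Q x y)))
        = (\<integral>y. \<integral>w. G w \<partial>map_pmf (\<lambda>z. (x, y, z)) (Q x y) \<partial>Y)"
      by (rule integral_bind_pmf[OF int_x])
    also have "\<dots> \<le> 0"
      by (rule integral_nonpos_pmf) (simp add: le[OF x])
    finally show ?thesis .
  qed
  have "(\<integral>w. G w \<partial>M) = (\<integral>x. \<integral>w. G w \<partial>bind_pmf Y (\<lambda>y. map_pmf (\<lambda>z. (x, y, z)) (Q x y)) \<partial>X)"
    unfolding M_def by (rule integral_bind_pmf[OF int[unfolded M_def]])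
  also have "\<dots> \<le> 0"
    by (rule integral_nonpos_pmf[OF inner])
  finally show ?thesis .
qed

lemma norm_add_sq_le:
  fixes x y :: "'a::real_inner"
  shows "(norm (x + y))^2 \<le> 2 * (norm x)^2 + 2 * (norm y)^2"
proof -
  have "(norm (x + y))^2 + (norm (x - y))^2 = 2 * (norm x)^2 + 2 * (norm y)^2"
    by (simp add: power2_norm_eq_inner inner_diff_left inner_diff_right inner_add_left inner_add_right
        inner_commute algebra_simps)
  then show ?thesis using zero_le_power2[of "norm (x - y)"] by linarith
qed

lemma norm_diff_scaleR_sq:
  fixes z u :: "'a::real_inner"
  shows "(norm (z - t *\<^sub>R u))^2 = (norm z)^2 - 2 * t * (z \<bullet> u) + t^2 * (norm u)^2"
  unfolding power2_norm_eq_inner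
  by (simp add: inner_diff_left inner_diff_right inner_commute algebra_simps power2_eq_square)

lemma sum_norm_sq_sub_centered:
  fixes u :: "'b \<Rightarrow> 'a::real_inner"
  assumes "(\<Sum>a\<in>A. u a) = 0"
  shows "(\<Sum>a\<in>A. (norm (z - u a))^2) = real (card A) * (norm z)^2 + (\<Sum>a\<in>A. (norm (u a))^2)"
proof -
  have "(\<Sum>a\<in>A. (norm (z - u a))^2) = (\<Sum>a\<in>A. (norm z)^2 - 2 * (z \<bullet> u a) + (norm (u a))^2)"
    by (intro sum.cong refl)
      (simp add: power2_norm_eq_inner inner_diff_left inner_diff_right inner_commute algebra_simps)
  also have "\<dots> = real (card A) * (norm z)^2 - 2 * (z \<bullet> (\<Sum>a\<in>A. u a)) + (\<Sum>a\<in>A. (norm (u a))^2)"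
    by (simp add: sum.distrib sum_subtractf inner_sum_right sum_distrib_left)
  finally show ?thesis by (simp add: assms)
qed

lemma sum_norm_sq_sub_mean_le:
  fixes c :: "nat \<Rightarrow> 'a::real_inner"
  shows "(\<Sum>i<n. (norm (c i - (1 / real n) *\<^sub>R (\<Sum>j<n. c j)))^2) \<le> (\<Sum>i<n. (norm (c i))^2)"
proof (cases "n = 0")
  case False
  define m where "m = (1 / real n) *\<^sub>R (\<Sum>j<n. c j)"
  have sum_c: "(\<Sum>j<n. c j) = real n *\<^sub>R m" using False by (simp add: m_def)
  have "(\<Sum>i<n. (norm (c i - m))^2) = (\<Sum>i<n. (norm (c i))^2 - 2 * (c i \<bullet> m) + (norm m)^2)"
    by (intro sum.cong refl)
      (simp add: power2_norm_eq_inner inner_diff_left inner_diff_right inner_commute algebra_simps)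
  also have "\<dots> = (\<Sum>i<n. (norm (c i))^2) - 2 * ((\<Sum>i<n. c i) \<bullet> m) + real n * (norm m)^2"
    by (simp add: sum.distrib sum_subtractf sum_distrib_left inner_sum_left)
  also have "\<dots> = (\<Sum>i<n. (norm (c i))^2) - real n * (norm m)^2"
    by (simp add: sum_c power2_norm_eq_inner)
  finally show ?thesis by (simp add: m_def[symmetric])
qed simp

lemma finite_batches [simp]: "finite (batches n k)"
  unfolding batches_def by (rule finite_subset[of _ "Pow {..<n}"]) auto

lemma card_batches: "card (batches n k) = n choose k"
  unfolding batches_def using n_subsets[of "{..<n}" k] by simp

lemma batches_nonempty: "k \<le> n \<Longrightarrow> batches n k \<noteq> {}"
  using card_batches[of n k] zero_less_binomial[of k n] by auto

lemma card_batches_superset: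
  assumes F: "F \<subseteq> {..<n}" "card F \<le> k"
  shows "card {S \<in> batches n k. F \<subseteq> S} = (n - card F) choose (k - card F)"
proof -
  have fin_F: "finite F" using F(1) finite_subset by blast
  have "bij_betw (\<lambda>S. S - F) {S \<in> batches n k. F \<subseteq> S} {T. T \<subseteq> {..<n} - F \<and> card T = k - card F}"
  proof (rule bij_betw_byWitness[where f' = "\<lambda>T. T \<union> F"])
    show "(\<lambda>S. S - F) ` {S \<in> batches n k. F \<subseteq> S} \<subseteq> {T. T \<subseteq> {..<n} - F \<and> card T = k - card F}"
      using fin_F by (auto simp: batches_def card_Diff_subset)
    show "(\<lambda>T. T \<union> F) ` {T. T \<subseteq> {..<n} - F \<and> card T = k - card F} \<subseteq> {S \<in> batches n k. F \<subseteq> S}"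
    proof
      fix S assume "S \<in> (\<lambda>T. T \<union> F) ` {T. T \<subseteq> {..<n} - F \<and> card T = k - card F}"
      then obtain T where T: "T \<subseteq> {..<n} - F" "card T = k - card F" and S: "S = T \<union> F" by auto
      have "card (T \<union> F) = card T + card F"
        using fin_F finite_subset[OF T(1)] T(1) by (intro card_Un_disjoint) auto
      then show "S \<in> {S \<in> batches n k. F \<subseteq> S}" using T F S by (auto simp: batches_def)
    qed
  qed auto
  then have "card {S \<in> batches n k. F \<subseteq> S} = card {T. T \<subseteq> {..<n} - F \<and> card T = k - card F}"
    by (rule bij_betw_same_card)
  also have "\<dots> = (n - card F) choose (k - card F)"
    using F fin_F by (simp add: n_subsets card_Diff_subset)
  finally show ?thesis .
qed

lemma card_batches_containing:
  assumes "i < n" "1 \<le> k"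
  shows "card {S \<in> batches n k. i \<in> S} = (n - 1) choose (k - 1)"
  using card_batches_superset[of "{i}" n k] assms by simp

lemma card_batches_containing_pair:
  assumes "i < n" "j < n" "i \<noteq> j"
  shows "card {S \<in> batches n k. i \<in> S \<and> j \<in> S} = (if 2 \<le> k then (n - 2) choose (k - 2) else 0)"
proof (cases "2 \<le> k")
  case True
  then show ?thesis using card_batches_superset[of "{i, j}" n k] assms by (simp add: numeral_2_eq_2)
next
  case False
  have "card {i, j} \<le> card S" if "S \<in> batches n k" "i \<in> S" "j \<in> S" for S
    using that by (intro card_mono) (auto simp: batches_def intro: finite_subset)
  then have "{S \<in> batches n k. i \<in> S \<and> j \<in> S} = {}"
    using False assms by (fastforce simp: batches_def)
  then show ?thesis using False by simp
qed

lemma sum_subset_lessThan_if: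
  fixes S :: "nat set"
  assumes "S \<subseteq> {..<n}"
  shows "sum f S = (\<Sum>i<n. if i \<in> S then f i else 0)"
proof -
  have "sum f ({..<n} \<inter> S) = (\<Sum>i<n. if i \<in> S then f i else 0)"
    by (rule sum.inter_restrict) simp
  moreover have "{..<n} \<inter> S = S" using assms by auto
  ultimately show ?thesis by simp
qed

lemma sum_batches_sum:
  fixes h :: "nat \<Rightarrow> 'a::real_vector"
  assumes "1 \<le> k"
  shows "(\<Sum>S\<in>batches n k. \<Sum>i\<in>S. h i) = real ((n - 1) choose (k - 1)) *\<^sub>R (\<Sum>i<n. h i)"
proof -
  have "(\<Sum>S\<in>batches n k. \<Sum>i\<in>S. h i) = (\<Sum>S\<in>batches n k. \<Sum>i<n. if i \<in> S then h i else 0)"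
    by (intro sum.cong refl sum_subset_lessThan_if) (simp add: batches_def)
  also have "\<dots> = (\<Sum>i<n. \<Sum>S\<in>batches n k. if i \<in> S then h i else 0)" by (rule sum.swap)
  also have "\<dots> = (\<Sum>i<n. real ((n - 1) choose (k - 1)) *\<^sub>R h i)"
    using assms
    by (intro sum.cong refl) (simp add: sum.inter_filter[symmetric] sum_constant_scaleR card_batches_containing)
  finally show ?thesis by (simp add: scaleR_sum_right)
qed

lemma sum_batches_norm_sum_sq_le:
  fixes w :: "nat \<Rightarrow> 'a::real_inner"
  assumes k: "1 \<le> k" and centered: "(\<Sum>i<n. w i) = 0"
  shows "(\<Sum>S\<in>batches n k. (norm (\<Sum>i\<in>S. w i))^2) \<le> real ((n - 1) choose (k - 1)) * (\<Sum>i<n. (norm (w i))^2)"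
proof -
  define A where "A = real ((n - 1) choose (k - 1))"
  define C where "C = real (if 2 \<le> k then (n - 2) choose (k - 2) else 0)"
  let ?pair = "\<lambda>S i j. if i \<in> S \<and> j \<in> S then w i \<bullet> w j else 0"
  have expand: "(norm (\<Sum>i\<in>S. w i))^2 = (\<Sum>i<n. \<Sum>j<n. ?pair S i j)" if "S \<in> batches n k" for S
  proof -
    have S: "S \<subseteq> {..<n}" using that by (auto simp: batches_def)
    have "(norm (\<Sum>i\<in>S. w i))^2 = (\<Sum>i\<in>S. \<Sum>j\<in>S. w i \<bullet> w j)"
      by (simp add: power2_norm_eq_inner inner_sum_left inner_sum_right) (rule sum.swap)
    also have "\<dots> = (\<Sum>i<n. \<Sum>j<n. ?pair S i j)"
      unfolding sum_subset_lessThan_if[OF S] by (intro sum.cong) auto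
    finally show ?thesis .
  qed
  text \<open>Every pair of distinct indices lies in the same number C of batches, so the cross terms
    add up to a multiple of the vanishing square norm of the total sum.\<close>
  have count: "(\<Sum>S\<in>batches n k. ?pair S i j) = C * (w i \<bullet> w j) + (if i = j then (A - C) * (w i \<bullet> w j) else 0)"
    if "i < n" "j < n" for i j
  proof (cases "i = j")
    case True
    then show ?thesis
      using that card_batches_containing[of i n k] k by (simp add: sum.inter_filter[symmetric] A_def algebra_simps)
  next
    case False
    then show ?thesis
      using that card_batches_containing_pair[of i n j k] by (simp add: sum.inter_filter[symmetric] C_def)
  qed
  have "(\<Sum>S\<in>batches n k. (norm (\<Sum>i\<in>S. w i))^2) = (\<Sum>S\<in>batches n k. \<Sum>i<n. \<Sum>j<n. ?pair S i j)"
    by (rule sum.cong[OF refl expand])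
  also have "\<dots> = (\<Sum>i<n. \<Sum>j<n. \<Sum>S\<in>batches n k. ?pair S i j)"
    by (subst sum.swap) (rule sum.cong[OF refl sum.swap])
  also have "\<dots> = (\<Sum>i<n. \<Sum>j<n. C * (w i \<bullet> w j) + (if i = j then (A - C) * (w i \<bullet> w j) else 0))"
    by (intro sum.cong refl count) auto
  also have "\<dots> = C * (\<Sum>i<n. \<Sum>j<n. w i \<bullet> w j) + (A - C) * (\<Sum>i<n. (norm (w i))^2)"
    by (simp add: sum.distrib sum_distrib_left power2_norm_eq_inner)
  also have "(\<Sum>i<n. \<Sum>j<n. w i \<bullet> w j) = 0"
    using centered by (simp add: inner_sum_left[symmetric] inner_sum_right[symmetric])
  finally have "(\<Sum>S\<in>batches n k. (norm (\<Sum>i\<in>S. w i))^2) = A * (\<Sum>i<n. (norm (w i))^2) - C * (\<Sum>i<n. (norm (w i))^2)"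
    by (simp add: left_diff_distrib)
  moreover have "0 \<le> C * (\<Sum>i<n. (norm (w i))^2)" by (simp add: C_def sum_nonneg)
  ultimately show ?thesis unfolding A_def by linarith
qed

lemma sum_batches_norm_minibatch_deviation_sq_le:
  fixes c :: "nat \<Rightarrow> 'a::real_inner"
  assumes b: "1 \<le> b" "b \<le> n"
  shows "(\<Sum>S\<in>batches n b. (norm ((1 / real b) *\<^sub>R (\<Sum>i\<in>S. c i) - (1 / real n) *\<^sub>R (\<Sum>i<n. c i)))^2)
    \<le> real (card (batches n b)) / (real b * real n) * (\<Sum>i<n. (norm (c i))^2)"
proof -
  define w where "w i = c i - (1 / real n) *\<^sub>R (\<Sum>j<n. c j)" for i
  define A where "A = real ((n - 1) choose (b - 1))"
  have n: "real n > 0" using b by simp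
  have centered: "(\<Sum>i<n. w i) = 0" using n by (simp add: w_def sum_subtractf sum_constant_scaleR)
  have deviation: "(1 / real b) *\<^sub>R (\<Sum>i\<in>S. c i) - (1 / real n) *\<^sub>R (\<Sum>i<n. c i) = (1 / real b) *\<^sub>R (\<Sum>i\<in>S. w i)"
    if "S \<in> batches n b" for S
    using that b by (simp add: batches_def w_def sum_subtractf scaleR_diff_right sum_constant_scaleR)
  have "A * real n = real b * real (card (batches n b))"
    using times_binomial_minus1_eq[of b n] b by (simp add: A_def card_batches flip: of_nat_mult)
  then have A_eq: "A / (real b)^2 = real (card (batches n b)) / (real b * real n)"
    using n b by (simp add: field_simps power2_eq_square)
  have "(\<Sum>S\<in>batches n b. (norm ((1 / real b) *\<^sub>R (\<Sum>i\<in>S. c i) - (1 / real n) *\<^sub>R (\<Sum>i<n. c i)))^2)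
      = (\<Sum>S\<in>batches n b. (norm (\<Sum>i\<in>S. w i))^2) / (real b)^2"
    by (simp add: deviation power_mult_distrib power_divide sum_divide_distrib)
  also have "\<dots> \<le> A * (\<Sum>i<n. (norm (w i))^2) / (real b)^2"
    using sum_batches_norm_sum_sq_le[OF b(1) centered] by (simp add: A_def divide_right_mono)
  also have "\<dots> \<le> A * (\<Sum>i<n. (norm (c i))^2) / (real b)^2"
    using sum_norm_sq_sub_mean_le[of c n] by (intro divide_right_mono mult_left_mono) (auto simp: A_def w_def)
  also have "\<dots> = real (card (batches n b)) / (real b * real n) * (\<Sum>i<n. (norm (c i))^2)"
    by (simp add: A_eq[symmetric])
  finally show ?thesis .
qed

definition inner_step :: "(nat \<Rightarrow> 'a \<Rightarrow> 'a::real_vector) \<Rightarrow> real \<Rightarrow> real \<Rightarrow> 'a \<Rightarrow> 'a \<Rightarrow> 'a \<Rightarrow> nat set \<Rightarrow> 'a" where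
  "inner_step Df lam eta x0 g x S = x - eta *\<^sub>R ((1 - lam) *\<^sub>R (gradI Df S x - gradI Df S x0) + lam *\<^sub>R g)"

lemma gradI_batch:
  "S \<in> batches n b \<Longrightarrow> gradI Df S x = (1 / real b) *\<^sub>R (\<Sum>i\<in>S. Df i x)"
  by (simp add: gradI_def batches_def)

lemma sum_batches_gradI:
  assumes "1 \<le> b" "b \<le> n"
  shows "(\<Sum>S\<in>batches n b. gradI Df S x) = real (card (batches n b)) *\<^sub>R gradf Df n x"
proof -
  have "real b * real (card (batches n b)) = real n * real ((n - 1) choose (b - 1))"
    using times_binomial_minus1_eq[of b n] assms by (simp add: card_batches flip: of_nat_mult)
  then have "real ((n - 1) choose (b - 1)) / real b = real (card (batches n b)) / real n"
    using assms by (simp add: field_simps)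
  then show ?thesis
    using assms by (simp add: gradI_batch gradf_def sum_batches_sum flip: scaleR_sum_right)
qed

lemma expectation_minibatch_noise_le:
  fixes Df :: "nat \<Rightarrow> 'a::real_inner \<Rightarrow> 'a"
  assumes smooth: "\<And>i x y. i < n \<Longrightarrow> norm (Df i x - Df i y) \<le> L * norm (x - y)"
    and b: "1 \<le> b" "b \<le> n"
  shows "(\<integral>S. (norm (z - t *\<^sub>R (gradI Df S x - gradI Df S y - (gradf Df n x - gradf Df n y))))^2
            \<partial>pmf_of_set (batches n b))
    \<le> (norm z)^2 + t^2 * L^2 * (norm (x - y))^2 / real b"
proof -
  define K where "K = real (card (batches n b))"
  define c where "c i = Df i x - Df i y" for i
  define noise where "noise S = gradI Df S x - gradI Df S y - (gradf Df n x - gradf Df n y)" for S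
  have K: "K > 0" using batches_nonempty[OF b(2)] by (simp add: K_def card_gt_0_iff)
  have noise_eq: "noise S = (1 / real b) *\<^sub>R (\<Sum>i\<in>S. c i) - (1 / real n) *\<^sub>R (\<Sum>i<n. c i)"
    if "S \<in> batches n b" for S
    using that by (simp add: noise_def c_def gradI_batch gradf_def sum_subtractf algebra_simps)
  have centered: "(\<Sum>S\<in>batches n b. t *\<^sub>R noise S) = 0"
    using b by (simp add: noise_def sum_subtractf sum_batches_gradI sum_constant_scaleR flip: scaleR_sum_right)
  have "(\<Sum>S\<in>batches n b. (norm (noise S))^2)
      = (\<Sum>S\<in>batches n b. (norm ((1 / real b) *\<^sub>R (\<Sum>i\<in>S. c i) - (1 / real n) *\<^sub>R (\<Sum>i<n. c i)))^2)"
    by (intro sum.cong refl) (simp add: noise_eq)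
  also have "\<dots> \<le> K / (real b * real n) * (\<Sum>i<n. (norm (c i))^2)"
    unfolding K_def by (rule sum_batches_norm_minibatch_deviation_sq_le[OF b])
  also have "\<dots> \<le> K / (real b * real n) * (\<Sum>i<n. L^2 * (norm (x - y))^2)"
    using smooth K
    by (intro mult_left_mono sum_mono) (simp_all add: c_def power_mult_distrib[symmetric] power_mono)
  also have "\<dots> = K * L^2 * (norm (x - y))^2 / real b" using b by simp
  finally have variance: "(\<Sum>S\<in>batches n b. (norm (noise S))^2) \<le> K * L^2 * (norm (x - y))^2 / real b" .
  have "(\<integral>S. (norm (z - t *\<^sub>R noise S))^2 \<partial>pmf_of_set (batches n b)) = (\<Sum>S\<in>batches n b. (norm (z - t *\<^sub>R noise S))^2) / K"
    using batches_nonempty[OF b(2)] by (simp add: integral_pmf_of_set K_def)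
  also have "\<dots> = (norm z)^2 + t^2 * (\<Sum>S\<in>batches n b. (norm (noise S))^2) / K"
    using K by (simp add: sum_norm_sq_sub_centered[OF centered] K_def[symmetric] power_mult_distrib
        sum_distrib_left[symmetric] field_simps)
  also have "\<dots> \<le> (norm z)^2 + t^2 * (K * L^2 * (norm (x - y))^2 / real b) / K"
    using variance K by (intro add_left_mono divide_right_mono mult_left_mono) auto
  finally show ?thesis using K by (simp add: noise_def)
qed

lemma expectation_inner_step_dist_sq_le:
  fixes Df :: "nat \<Rightarrow> 'a::real_inner \<Rightarrow> 'a" and x0 g :: 'a and lam :: real
  assumes smooth: "\<And>i x y. i < n \<Longrightarrow> norm (Df i x - Df i y) \<le> L * norm (x - y)"
    and b: "1 \<le> b" "b \<le> n"
  defines "e \<equiv> lam *\<^sub>R g - (1 - lam) *\<^sub>R gradf Df n x0"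
  shows "(\<integral>S. (norm (inner_step Df lam eta x0 g x S - x0))^2 \<partial>pmf_of_set (batches n b))
    \<le> (1 + eta^2 * (1 - lam)^2 * L^2 / real b) * (norm (x - x0))^2
      - 2 * eta * (1 - lam) * (gradf Df n x \<bullet> (x - x0)) - 2 * eta * (e \<bullet> (x - x0))
      + 2 * eta^2 * (1 - lam)^2 * (norm (gradf Df n x))^2 + 2 * eta^2 * (norm e)^2"
proof -
  define m where "m = (1 - lam) *\<^sub>R gradf Df n x + e"
  define z where "z = x - x0 - eta *\<^sub>R m"
  have step: "inner_step Df lam eta x0 g x S - x0
      = z - (eta * (1 - lam)) *\<^sub>R (gradI Df S x - gradI Df S x0 - (gradf Df n x - gradf Df n x0))" for S
    by (simp add: inner_step_def z_def m_def e_def algebra_simps)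
  have z: "(norm z)^2 = (norm (x - x0))^2 - 2 * eta * (m \<bullet> (x - x0)) + eta^2 * (norm m)^2"
    unfolding z_def norm_diff_scaleR_sq by (simp add: inner_commute)
  have "(norm m)^2 \<le> 2 * (1 - lam)^2 * (norm (gradf Df n x))^2 + 2 * (norm e)^2"
    using norm_add_sq_le[of "(1 - lam) *\<^sub>R gradf Df n x" e] by (simp add: m_def power_mult_distrib)
  then have m: "eta^2 * (norm m)^2 \<le> eta^2 * (2 * (1 - lam)^2 * (norm (gradf Df n x))^2 + 2 * (norm e)^2)"
    by (rule mult_left_mono) simp
  have "(\<integral>S. (norm (inner_step Df lam eta x0 g x S - x0))^2 \<partial>pmf_of_set (batches n b))
      \<le> (norm z)^2 + (eta * (1 - lam))^2 * L^2 * (norm (x - x0))^2 / real b"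
    unfolding step by (rule expectation_minibatch_noise_le[OF smooth b])
  also have "\<dots> = (norm (x - x0))^2 - 2 * eta * (m \<bullet> (x - x0)) + eta^2 * (norm m)^2
      + eta^2 * (1 - lam)^2 * L^2 / real b * (norm (x - x0))^2"
    by (simp add: z power_mult_distrib)
  also have "\<dots> \<le> (norm (x - x0))^2 - 2 * eta * (m \<bullet> (x - x0))
      + eta^2 * (2 * (1 - lam)^2 * (norm (gradf Df n x))^2 + 2 * (norm e)^2)
      + eta^2 * (1 - lam)^2 * L^2 / real b * (norm (x - x0))^2"
    using m by simp
  also have "\<dots> = (1 + eta^2 * (1 - lam)^2 * L^2 / real b) * (norm (x - x0))^2
      - 2 * eta * (1 - lam) * (gradf Df n x \<bullet> (x - x0)) - 2 * eta * (e \<bullet> (x - x0))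
      + 2 * eta^2 * (1 - lam)^2 * (norm (gradf Df n x))^2 + 2 * eta^2 * (norm e)^2"
    by (simp add: m_def inner_add_left algebra_simps)
  finally show ?thesis .
qed

lemma inner_loop_snoc:
  "inner_loop Df lam eta x0 g x (Ss @ [S]) = inner_step Df lam eta x0 g (inner_loop Df lam eta x0 g x Ss) S"
  by (induction Ss arbitrary: x) (auto simp: inner_step_def)

lemma iid_list_Suc_snoc:
  "iid_list (Suc k) p = bind_pmf (iid_list k p) (\<lambda>xs. map_pmf (\<lambda>s. xs @ [s]) p)"
proof (induction k)
  case 0
  then show ?case by (simp add: bind_return_pmf map_pmf_def)
next
  case (Suc k)
  have "iid_list (Suc (Suc k)) p
      = bind_pmf p (\<lambda>x. bind_pmf (bind_pmf (iid_list k p) (\<lambda>xs. map_pmf (\<lambda>s. xs @ [s]) p)) (\<lambda>xs. return_pmf (x # xs)))"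
    by (subst iid_list.simps(2)) (simp only: Suc)
  also have "\<dots> = bind_pmf p (\<lambda>x. bind_pmf (iid_list k p) (\<lambda>ys. bind_pmf p (\<lambda>s. return_pmf (x # ys @ [s]))))"
    by (simp add: bind_assoc_pmf map_pmf_def bind_return_pmf del: iid_list.simps)
  also have "\<dots> = bind_pmf (iid_list (Suc k) p) (\<lambda>xs. map_pmf (\<lambda>s. xs @ [s]) p)"
    by (simp add: bind_assoc_pmf map_pmf_def bind_return_pmf)
  finally show ?case .
qed

definition inner_loop_pmf :: "(nat \<Rightarrow> 'a \<Rightarrow> 'a::real_vector) \<Rightarrow> real \<Rightarrow> real \<Rightarrow> real \<Rightarrow> nat set pmf \<Rightarrow> 'a \<Rightarrow> 'a \<Rightarrow> 'a pmf" where
  "inner_loop_pmf Df lam eta p U x0 g =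
     bind_pmf (geometric_pmf p) (\<lambda>N. map_pmf (inner_loop Df lam eta x0 g x0) (iid_list N U))"

text \<open>Memorylessness: a geometric number of steps is either zero or one more than an independent
  copy of itself.\<close>
lemma inner_loop_pmf_unfold:
  assumes "0 < p" "p \<le> 1"
  shows "inner_loop_pmf Df lam eta p U x0 g = bind_pmf (bernoulli_pmf p) (\<lambda>c. if c then return_pmf x0
           else bind_pmf (inner_loop_pmf Df lam eta p U x0 g) (\<lambda>x. map_pmf (inner_step Df lam eta x0 g x) U))"
proof -
  have Suc: "map_pmf (inner_loop Df lam eta x0 g x0) (iid_list (Suc k) U)
      = bind_pmf (map_pmf (inner_loop Df lam eta x0 g x0) (iid_list k U)) (\<lambda>x. map_pmf (inner_step Df lam eta x0 g x) U)" for k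
    unfolding iid_list_Suc_snoc
    by (simp add: map_bind_pmf bind_map_pmf pmf.map_comp o_def inner_loop_snoc del: iid_list.simps)
  have "inner_loop_pmf Df lam eta p U x0 g
      = bind_pmf (bind_pmf (bernoulli_pmf p) (\<lambda>c. if c then return_pmf 0 else map_pmf Suc (geometric_pmf p)))
          (\<lambda>N. map_pmf (inner_loop Df lam eta x0 g x0) (iid_list N U))"
    unfolding inner_loop_pmf_def by (subst geometric_bind_pmf_unfold) (use assms in auto)
  also have "\<dots> = bind_pmf (bernoulli_pmf p) (\<lambda>c. if c then return_pmf x0
           else bind_pmf (inner_loop_pmf Df lam eta p U x0 g) (\<lambda>x. map_pmf (inner_step Df lam eta x0 g x) U))"
    unfolding bind_assoc_pmf
    by (intro bind_pmf_cong refl)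
      (simp add: bind_return_pmf bind_map_pmf Suc inner_loop_pmf_def bind_assoc_pmf del: iid_list.simps(2))
  finally show ?thesis .
qed

lemma integral_restart_pmf:
  fixes f :: "'a \<Rightarrow> real"
  assumes Q: "Q = bind_pmf (bernoulli_pmf p) (\<lambda>c. if c then return_pmf x0 else bind_pmf Q K)"
    and p: "0 < p" "p < 1"
    and f: "integrable (measure_pmf Q) f"
  shows "integrable (measure_pmf Q) (\<lambda>x. \<integral>y. f y \<partial>K x)"
    and "(\<integral>x. f x \<partial>Q) = p * f x0 + (1 - p) * (\<integral>x. \<integral>y. f y \<partial>K x \<partial>Q)"
proof -
  let ?R = "bind_pmf (bernoulli_pmf p) (\<lambda>c. if c then return_pmf x0 else bind_pmf Q K)"
  have f_R: "integrable (measure_pmf ?R) f" using f by (simp only: Q[symmetric])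
  have f_bind: "integrable (measure_pmf (bind_pmf Q K)) f"
    using integrable_bind_pmf_kernel[OF f_R, of False] p by simp
  then show "integrable (measure_pmf Q) (\<lambda>x. \<integral>y. f y \<partial>K x)"
    by (rule integrable_bind_pmf_conditional)
  have "(\<integral>x. f x \<partial>Q) = (\<integral>x. f x \<partial>?R)" by (simp only: Q[symmetric])
  also have "\<dots> = p * f x0 + (1 - p) * (\<integral>x. f x \<partial>bind_pmf Q K)"
    using integral_bind_pmf[OF f_R] p by (simp add: return_pmf.rep_eq integral_return)
  also have "(\<integral>x. f x \<partial>bind_pmf Q K) = (\<integral>x. \<integral>y. f y \<partial>K x \<partial>Q)"
    by (rule integral_bind_pmf[OF f_bind])
  finally show "(\<integral>x. f x \<partial>Q) = p * f x0 + (1 - p) * (\<integral>x. \<integral>y. f y \<partial>K x \<partial>Q)" .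
qed

lemma expectation_epoch_given_anchor_le:
  fixes Df :: "nat \<Rightarrow> 'a::real_inner \<Rightarrow> 'a" and x0 g :: 'a and lam eta L :: real
  assumes smooth: "\<And>i x y. i < n \<Longrightarrow> norm (Df i x - Df i y) \<le> L * norm (x - y)"
    and b: "1 \<le> b" "b \<le> n" and B: "1 \<le> B"
  defines "Q \<equiv> inner_loop_pmf Df lam eta (real b / (real B + real b)) (pmf_of_set (batches n b)) x0 g"
    and "e \<equiv> lam *\<^sub>R g - (1 - lam) *\<^sub>R gradf Df n x0"
  assumes int_dist: "integrable (measure_pmf Q) (\<lambda>x. (norm (x - x0))^2)"
    and int_grad: "integrable (measure_pmf Q) (\<lambda>x. (norm (gradf Df n x))^2)"
  shows "(\<integral>x. (real b - (1 - lam)^2 * eta^2 * L^2 * real B / real b) * (norm (x - x0))^2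
            + 2 * eta * real B * (e \<bullet> (x - x0)) + 2 * (1 - lam) * eta * real B * (gradf Df n x \<bullet> (x - x0))
            - 2 * (1 - lam)^2 * eta^2 * real B * (norm (gradf Df n x))^2 - 2 * eta^2 * real B * (norm e)^2 \<partial>Q)
    \<le> 0"
proof -
  define p where "p = real b / (real B + real b)"
  define D where "D = (\<lambda>x. (norm (x - x0))^2)"
  define psi where "psi = (\<lambda>x. \<integral>S. D (inner_step Df lam eta x0 g x S) \<partial>pmf_of_set (batches n b))"
  define c where "c = eta^2 * (1 - lam)^2 * L^2 / real b"
  define phi where "phi = (\<lambda>x. (1 + c) * D x - 2 * eta * (1 - lam) * (gradf Df n x \<bullet> (x - x0))
      - 2 * eta * (e \<bullet> (x - x0)) + 2 * eta^2 * (1 - lam)^2 * (norm (gradf Df n x))^2 + 2 * eta^2 * (norm e)^2)"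
  have p: "0 < p" "p < 1" using b B by (auto simp: p_def)
  have restart: "Q = bind_pmf (bernoulli_pmf p) (\<lambda>c. if c then return_pmf x0
      else bind_pmf Q (\<lambda>x. map_pmf (inner_step Df lam eta x0 g x) (pmf_of_set (batches n b))))"
    unfolding Q_def p_def[symmetric] using p by (intro inner_loop_pmf_unfold) auto
  have int_D: "integrable Q D" using int_dist by (simp add: D_def)
  have int_psi: "integrable Q psi" and D_restart: "(\<integral>x. D x \<partial>Q) = (1 - p) * (\<integral>x. psi x \<partial>Q)"
    using integral_restart_pmf[OF restart p int_D] by (simp_all add: psi_def D_def)
  have int_gd: "integrable Q (\<lambda>x. gradf Df n x \<bullet> (x - x0))"
    using int_grad int_dist by (rule integrable_inner_if_norm_sq)
  have int_ed: "integrable Q (\<lambda>x. e \<bullet> (x - x0))"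
    using int_dist by (intro integrable_inner_if_norm_sq) simp_all
  have int_phi: "integrable Q phi" unfolding phi_def using int_D int_gd int_ed int_grad by simp
  have "(\<integral>x. psi x \<partial>Q) \<le> (\<integral>x. phi x \<partial>Q)"
    by (intro integral_mono[OF int_psi int_phi])
      (unfold psi_def phi_def D_def c_def e_def, rule expectation_inner_step_dist_sq_le[OF smooth b])
  also have "\<dots> = (1 + c) * (\<integral>x. D x \<partial>Q) - 2 * eta * (1 - lam) * (\<integral>x. gradf Df n x \<bullet> (x - x0) \<partial>Q)
      - 2 * eta * (\<integral>x. e \<bullet> (x - x0) \<partial>Q) + 2 * eta^2 * (1 - lam)^2 * (\<integral>x. (norm (gradf Df n x))^2 \<partial>Q)
      + 2 * eta^2 * (norm e)^2"
    unfolding phi_def using int_D int_gd int_ed int_grad by simp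
  finally have psi_le: "(\<integral>x. psi x \<partial>Q) \<le> \<dots>" .
  have "(real B + real b) * (1 - p) = real B" using b by (simp add: p_def field_simps)
  then have "(real B + real b) * (\<integral>x. D x \<partial>Q) = real B * (\<integral>x. psi x \<partial>Q)"
    by (simp add: D_restart mult.assoc[symmetric])
  also have "\<dots> \<le> real B * ((1 + c) * (\<integral>x. D x \<partial>Q) - 2 * eta * (1 - lam) * (\<integral>x. gradf Df n x \<bullet> (x - x0) \<partial>Q)
      - 2 * eta * (\<integral>x. e \<bullet> (x - x0) \<partial>Q) + 2 * eta^2 * (1 - lam)^2 * (\<integral>x. (norm (gradf Df n x))^2 \<partial>Q)
      + 2 * eta^2 * (norm e)^2)"
    by (rule mult_left_mono[OF psi_le]) simp
  finally have "(real B + real b) * (\<integral>x. D x \<partial>Q) \<le> \<dots>" .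
  moreover have "(\<integral>x. (real b - (1 - lam)^2 * eta^2 * L^2 * real B / real b) * (norm (x - x0))^2
            + 2 * eta * real B * (e \<bullet> (x - x0)) + 2 * (1 - lam) * eta * real B * (gradf Df n x \<bullet> (x - x0))
            - 2 * (1 - lam)^2 * eta^2 * real B * (norm (gradf Df n x))^2 - 2 * eta^2 * real B * (norm e)^2 \<partial>Q)
      = (real b - (1 - lam)^2 * eta^2 * L^2 * real B / real b) * (\<integral>x. D x \<partial>Q)
            + 2 * eta * real B * (\<integral>x. e \<bullet> (x - x0) \<partial>Q)
            + 2 * (1 - lam) * eta * real B * (\<integral>x. gradf Df n x \<bullet> (x - x0) \<partial>Q)
            - 2 * (1 - lam)^2 * eta^2 * real B * (\<integral>x. (norm (gradf Df n x))^2 \<partial>Q)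
            - 2 * eta^2 * real B * (norm e)^2"
    using int_dist int_gd int_ed int_grad by (simp add: D_def)
  ultimately show ?thesis by (simp add: c_def algebra_simps)
qed

lemma epoch_eq_bind_inner_loop_pmf:
  "epoch Df n B b lam eta X0 = bind_pmf X0 (\<lambda>x0. bind_pmf (pmf_of_set (batches n B)) (\<lambda>I. map_pmf (\<lambda>x. (x0, I, x))
     (inner_loop_pmf Df lam eta (real b / (real B + real b)) (pmf_of_set (batches n b)) x0 (gradI Df I x0))))"
  unfolding epoch_def inner_loop_pmf_def
  by (simp add: map_bind_pmf map_pmf_def bind_assoc_pmf bind_return_pmf del: iid_list.simps)

lemma expectation_epoch_combination_nonpos:
  fixes Df :: "nat \<Rightarrow> 'a::real_inner \<Rightarrow> 'a" and X0 :: "'a pmf" and lam eta L :: real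
  assumes smooth: "\<And>i x y. i < n \<Longrightarrow> norm (Df i x - Df i y) \<le> L * norm (x - y)"
    and b: "1 \<le> b" "b \<le> n" and B: "1 \<le> B"
    and int_dist: "integrable (measure_pmf (epoch Df n B b lam eta X0)) (\<lambda>(x0, I, x). (norm (x - x0))^2)"
    and int_grad: "integrable (measure_pmf (epoch Df n B b lam eta X0)) (\<lambda>(x0, I, x). (norm (gradf Df n x))^2)"
    and int_err: "integrable (measure_pmf (epoch Df n B b lam eta X0)) (\<lambda>(x0, I, x). (norm (err Df n lam I x0))^2)"
    and int_err_dist: "integrable (measure_pmf (epoch Df n B b lam eta X0)) (\<lambda>(x0, I, x). err Df n lam I x0 \<bullet> (x - x0))"
    and int_grad_dist: "integrable (measure_pmf (epoch Df n B b lam eta X0)) (\<lambda>(x0, I, x). gradf Df n x \<bullet> (x - x0))"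
  shows "measure_pmf.expectation (epoch Df n B b lam eta X0) (\<lambda>(x0, I, x).
      (real b - (1 - lam)^2 * eta^2 * L^2 * real B / real b) * (norm (x - x0))^2
      + 2 * eta * real B * (err Df n lam I x0 \<bullet> (x - x0)) + 2 * (1 - lam) * eta * real B * (gradf Df n x \<bullet> (x - x0))
      - 2 * (1 - lam)^2 * eta^2 * real B * (norm (gradf Df n x))^2 - 2 * eta^2 * real B * (norm (err Df n lam I x0))^2)
    \<le> 0"
proof -
  let ?Q = "\<lambda>x0 I. inner_loop_pmf Df lam eta (real b / (real B + real b)) (pmf_of_set (batches n b)) x0 (gradI Df I x0)"
  note epoch = epoch_eq_bind_inner_loop_pmf[of Df n B b lam eta X0]
  show ?thesis
    unfolding epoch
  proof (rule integral_nonpos_bind_bind_pmf, goal_cases)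
    case 1
    show ?case
      using int_dist int_grad int_err int_err_dist int_grad_dist by (simp add: case_prod_unfold epoch)
  next
    case (2 x0 I)
    have "integrable (?Q x0 I) (\<lambda>x. (norm (x - x0))^2)" and "integrable (?Q x0 I) (\<lambda>x. (norm (gradf Df n x))^2)"
      using integrable_bind_pmf_kernel[OF integrable_bind_pmf_kernel[OF int_dist[unfolded epoch] 2(1)] 2(2)]
        integrable_bind_pmf_kernel[OF integrable_bind_pmf_kernel[OF int_grad[unfolded epoch] 2(1)] 2(2)]
      by simp_all
    from expectation_epoch_given_anchor_le[OF smooth b B this] show ?case
      by (simp add: err_def)
  qed
qed

theorem lemmaB9:
  fixes fi :: "nat \<Rightarrow> 'a::euclidean_space \<Rightarrow> real"
    and Df :: "nat \<Rightarrow> 'a \<Rightarrow> 'a"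
    and n B b :: nat and L lam eta :: real
    and X0 :: "'a pmf"
  assumes grad: "\<And>i x. i < n \<Longrightarrow> (fi i has_derivative (\<lambda>h. Df i x \<bullet> h)) (at x)"
    and smooth: "\<And>i x y. i < n \<Longrightarrow> norm (Df i x - Df i y) \<le> L * norm (x - y)"
    and n: "1 \<le> n"
    and B: "1 \<le> B" "B \<le> n" and b: "1 \<le> b" "b \<le> n"
    and lam: "0 < lam" "lam < 1"
    and eta: "0 < eta"
    and step: "eta^2 * L^2 * real B < (real b)^2"
    and int1: "integrable (measure_pmf (epoch Df n B b lam eta X0))
                 (\<lambda>(x0, I, x). (norm (x - x0))^2)"
    and int2: "integrable (measure_pmf (epoch Df n B b lam eta X0))
                 (\<lambda>(x0, I, x). (norm (gradf Df n x))^2)"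
    and int3: "integrable (measure_pmf (epoch Df n B b lam eta X0))
                 (\<lambda>(x0, I, x). (norm (err Df n lam I x0))^2)"
  shows
    "(real b - (1 - lam)^2 * eta^2 * L^2 * real B / real b)
        * measure_pmf.expectation (epoch Df n B b lam eta X0) (\<lambda>(x0, I, x). (norm (x - x0))^2)
     + 2 * eta * real B
        * measure_pmf.expectation (epoch Df n B b lam eta X0) (\<lambda>(x0, I, x). err Df n lam I x0 \<bullet> (x - x0))
     \<le> - 2 * (1 - lam) * eta * real B
        * measure_pmf.expectation (epoch Df n B b lam eta X0) (\<lambda>(x0, I, x). gradf Df n x \<bullet> (x - x0))
     + 2 * (1 - lam)^2 * eta^2 * real B
        * measure_pmf.expectation (epoch Df n B b lam eta X0) (\<lambda>(x0, I, x). (norm (gradf Df n x))^2)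
     + 2 * eta^2 * real B
        * measure_pmf.expectation (epoch Df n B b lam eta X0) (\<lambda>(x0, I, x). (norm (err Df n lam I x0))^2)"
proof -
  have int_err_dist: "integrable (measure_pmf (epoch Df n B b lam eta X0)) (\<lambda>(x0, I, x). err Df n lam I x0 \<bullet> (x - x0))"
    using int3 int1 unfolding case_prod_unfold by (rule integrable_inner_if_norm_sq)
  have int_grad_dist: "integrable (measure_pmf (epoch Df n B b lam eta X0)) (\<lambda>(x0, I, x). gradf Df n x \<bullet> (x - x0))"
    using int2 int1 unfolding case_prod_unfold by (rule integrable_inner_if_norm_sq)
  show ?thesis
    using expectation_epoch_combination_nonpos[OF smooth b B(1) int1 int2 int3 int_err_dist int_grad_dist]
      int1 int2 int3 int_err_dist int_grad_dist
    unfolding case_prod_unfold by simp (simp add: left_diff_distrib)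
qed

end
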